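(* Let $M$ and $N$ be weight sequences with $m_k^{1/k}\to\infty$, $n_k^{1/k}\to\infty$, and such that there is $C\ge1$ with $M_{k+j}\le C^{k+j}N_jN_k$ for all $j,k\in\mathbb{N}$. Then there is $D\ge1$ such that $h_m(t)\le h_n(Dt)^2$ for all $t>0$.
   Context: A weight sequence is given by an increasing sequence $1=\mu_0\le\mu_1\le\cdots$ via $M_k=\mu_0\cdots\mu_k=k!\,m_k$, with $M_k^{1/k}\to\infty$; analogously $N\leftrightarrow n$. For a positive sequence $m$ with $m_0=1$, $h_m(t)=\inf_{k\in\mathbb{N}}m_kt^k$ for $t>0$. *)

theory Defs
  imports "HOL-Analysis.Analysis"
begin

definition quot_seq :: "(nat \<Rightarrow> real) \<Rightarrow> nat \<Rightarrow> real" where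
  "quot_seq M k = (if k = 0 then 1 else M k / M (k - 1))"

definition weight_seq :: "(nat \<Rightarrow> real) \<Rightarrow> bool" where
  "weight_seq M \<longleftrightarrow> M 0 = 1 \<and> (\<forall>k. 0 < M k) \<and> mono (quot_seq M)
     \<and> filterlim (\<lambda>k. root k (M k)) at_top sequentially"

definition small_seq :: "(nat \<Rightarrow> real) \<Rightarrow> nat \<Rightarrow> real" where
  "small_seq M k = M k / fact k"

definition h_fun :: "(nat \<Rightarrow> real) \<Rightarrow> real \<Rightarrow> real" where
  "h_fun m t = (INF k. m k * t ^ k)"

end

theory Submission
  imports Defs
begin

text \<open>
  Dividing the hypothesis by \<open>(j+k)!\<close> and using \<open>j! k! \<le> (j+k)!\<close> gives
  \<open>m(j+k) t^(j+k) \<le> a(j) a(k)\<close> with \<open>a(k) = n(k) (C t)^k > 0\<close>. So \<open>h_m(t)\<close>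
  bounds every product \<open>a(j) a(k)\<close> from below, hence also the square of their
  infimum \<open>h_n(C t)\<close>; thus \<open>D = C\<close> works.
\<close>

lemma fact_mult_le_fact_add: "fact j * fact k \<le> (fact (j + k) :: 'a::linordered_semidom)"
proof -
  have "fact j * fact k * ((j + k) choose k) = (fact (j + k) :: nat)"
    using binomial_fact_lemma[of k "j + k"] by (simp add: mult.commute)
  moreover have "(j + k) choose k \<ge> 1"
    by (simp add: Suc_leI)
  ultimately have "fact j * fact k \<le> (fact (j + k) :: nat)"
    by (metis mult_le_mono2 mult.right_neutral)
  thus ?thesis
    by (metis of_nat_fact of_nat_le_iff of_nat_mult)
qed

lemma le_INF_square:
  fixes a :: "'i \<Rightarrow> real"
  assumes pos: "\<And>k. a k > 0" and le: "\<And>j k. h \<le> a j * a k"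
  shows "h \<le> (INF k. a k)\<^sup>2"
proof -
  define I where "I = (INF k. a k)"
  have le_INF: "c \<le> I" if "\<And>k. c \<le> a k" for c
    unfolding I_def by (rule cINF_greatest) (simp_all add: that)
  have "I \<ge> 0"
    by (rule le_INF) (simp add: less_imp_le pos)
  have le_I_times: "h \<le> I * a k" for k
  proof -
    have "h / a k \<le> a j" for j
      using le[of j k] pos[of k] by (simp add: divide_le_eq)
    hence "h / a k \<le> I"
      by (rule le_INF)
    thus ?thesis
      using pos[of k] by (simp add: divide_le_eq mult.commute)
  qed
  show ?thesis
  proof (cases "I = 0")
    case True
    thus ?thesis using le_I_times[of undefined] by (simp add: I_def)
  next
    case False
    with \<open>I \<ge> 0\<close> have "I > 0" by simp
    have "h / I \<le> a k" for k
      using le_I_times[of k] \<open>I > 0\<close> by (simp add: divide_le_eq mult.commute)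
    hence "h / I \<le> I"
      by (rule le_INF)
    thus ?thesis
      using \<open>I > 0\<close> by (simp add: divide_le_eq power2_eq_square I_def)
  qed
qed

lemma h_fun_le:
  assumes "\<And>k. m k \<ge> 0" and "t \<ge> 0"
  shows "h_fun m t \<le> m k * t ^ k"
  unfolding h_fun_def
  using assms by (intro cINF_lower bdd_belowI[of _ 0]) auto

lemma small_seq_pos: "weight_seq M \<Longrightarrow> small_seq M k > 0"
  by (simp add: weight_seq_def small_seq_def)

lemma small_seq_add_le_mult:
  fixes M N :: "nat \<Rightarrow> real"
  assumes N_pos: "\<And>k. N k > 0" and "C \<ge> 0" and "t \<ge> 0"
    and M_le: "M (j + k) \<le> C ^ (j + k) * N j * N k"
  shows "small_seq M (j + k) * t ^ (j + k)
    \<le> (small_seq N j * (C * t) ^ j) * (small_seq N k * (C * t) ^ k)"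
proof -
  have "0 \<le> C ^ (j + k) * N j * N k"
    using N_pos[of j] N_pos[of k] \<open>C \<ge> 0\<close> by (simp add: less_imp_le)
  hence "M (j + k) / fact (j + k) \<le> C ^ (j + k) * N j * N k / (fact j * fact k)"
    using M_le fact_mult_le_fact_add[of j k]
    by (intro frac_le) auto
  hence "small_seq M (j + k) * t ^ (j + k) \<le> C ^ (j + k) * N j * N k / (fact j * fact k) * t ^ (j + k)"
    unfolding small_seq_def using \<open>t \<ge> 0\<close> by (intro mult_right_mono) auto
  also have "\<dots> = (small_seq N j * (C * t) ^ j) * (small_seq N k * (C * t) ^ k)"
    unfolding small_seq_def by (simp add: power_add power_mult_distrib field_simps)
  finally show ?thesis .
qed

theorem lemma3p13:
  fixes M N :: "nat \<Rightarrow> real" and C :: real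
  assumes "weight_seq M" and "weight_seq N"
    and "filterlim (\<lambda>k. root k (small_seq M k)) at_top sequentially"
    and "filterlim (\<lambda>k. root k (small_seq N k)) at_top sequentially"
    and "C \<ge> 1"
    and "\<forall>j k. M (k + j) \<le> C ^ (k + j) * N j * N k"
  shows "\<exists>D\<ge>1. \<forall>t>0. h_fun (small_seq M) t \<le> (h_fun (small_seq N) (D * t))\<^sup>2"
proof (intro exI[of _ C] conjI allI impI)
  show "C \<ge> 1" by fact
  fix t :: real
  assume "t > 0"
  have N_pos: "N k > 0" for k
    using \<open>weight_seq N\<close> by (simp add: weight_seq_def)
  have "h_fun (small_seq M) t \<le> (small_seq N j * (C * t) ^ j) * (small_seq N k * (C * t) ^ k)"
    for j k
  proof -
    have "h_fun (small_seq M) t \<le> small_seq M (j + k) * t ^ (j + k)"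
      using small_seq_pos[OF \<open>weight_seq M\<close>] \<open>t > 0\<close> by (intro h_fun_le less_imp_le)
    also have "\<dots> \<le> (small_seq N j * (C * t) ^ j) * (small_seq N k * (C * t) ^ k)"
      using assms(5,6) \<open>t > 0\<close> by (intro small_seq_add_le_mult N_pos) (auto simp: add.commute)
    finally show ?thesis .
  qed
  hence "h_fun (small_seq M) t \<le> (INF k. small_seq N k * (C * t) ^ k)\<^sup>2"
    using small_seq_pos[OF \<open>weight_seq N\<close>] \<open>C \<ge> 1\<close> \<open>t > 0\<close>
    by (intro le_INF_square) simp
  thus "h_fun (small_seq M) t \<le> (h_fun (small_seq N) (C * t))\<^sup>2"
    by (simp add: h_fun_def)
qed

end
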